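(* For every regular expression $R$ and every database $D$, $\llbracket R\rrbracket_{BT}(D)=\pi_D\circ\mathrm{bindingtrail}\circ\mathrm{match}_{\mathcal{A}}(D)$ (as bags), where $\mathcal{A}=Gl(R)$, $\mathrm{match}_{\mathcal{A}}(D)$ is the bag of all runs of $D\times\mathcal{A}$, and $\mathrm{bindingtrail}$ is the filter keeping exactly the runs $(n_0,q_0)(e_0,\delta_0)(n_1,q_1)\cdots(e_{k-1},\delta_{k-1})(n_k,q_k)$ in which the pairs $(e_i,q_{i+1})$, $0\le i<k$, are pairwise distinct.
   Context: A database is $D=(\Sigma,V,E,\mathrm{src},\mathrm{tgt},\mathrm{lbl})$ with finite alphabet $\Sigma$, finite vertex set $V$, finite edge set $E$, $\mathrm{src},\mathrm{tgt}:E\to V$, $\mathrm{lbl}:E\to2^\Sigma$; walks are alternating sequences $(n_0,e_0,\dots,e_{k-1},n_k)$ with $\mathrm{src}(e_i)=n_i$, $\mathrm{tgt}(e_i)=n_{i+1}$, and $\mathrm{lbl}(w)=\{u_0\cdots u_{k-1}:u_i\in\mathrm{lbl}(e_i)\}$. Regular expressions over $\Sigma$: $R::=\varepsilon\mid a\mid R^*\mid R\cdot R\mid R+R$ ($a\in\Sigma$). A linearisation $R'$ of $R$ replaces each atom occurrence by a distinct fresh symbol (a position) from an alphabet $\Gamma$; for $\alpha\in\Gamma$, $\overline{\alpha}\in\Sigma$ is the letter it replaced, extended to words. The Glushkov automaton $Gl(R)$ is the trim part of $(\Sigma,\{i\}\uplus\Gamma,\Delta,\{i\},F)$ with $\Delta=\{(\alpha,\overline\beta,\beta):\exists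 u,v\in\Gamma^*,\ u\alpha\beta v\in L(R')\}\cup\{(i,\overline\alpha,\alpha):\exists u\in\Gamma^*,\ \alpha u\in L(R')\}$ and $F=\{\alpha:\exists u,\ u\alpha\in L(R')\}\cup(\{i\}$ if $\varepsilon\in L(R'))$. For an automaton $\mathcal{A}=(\Sigma,Q,\Delta,I,F)$ the run database $D\times\mathcal{A}$ has vertices $V\times Q$ and edges $(e,\delta)$ with $e\in E$, $\delta=(q,a,q')\in\Delta$, $a\in\mathrm{lbl}(e)$, from $(\mathrm{src}(e),q)$ to $(\mathrm{tgt}(e),q')$; runs are its walks from $V\times I$ to $V\times F$; $\pi_D$ projects to $D$. A binding trail of $D$ matching $R$ is a sequence $(e_1,\alpha_1)\cdots(e_n,\alpha_n)\in(E\times\Gamma)^*$ such that $e_1\cdots e_n$ forms a walk of $D$, $\overline{\alpha_1\cdots\alpha_n}\in\mathrm{lbl}(e_1\cdots e_n)$, $\alpha_1\cdots\alpha_n\in L(R')$, and the pairs $(e_i,\alpha_i)$ are pairwise distinct. The binding-trail semantics $\llbracket R\rrbracket_{BT}(D)$ is the bag of projections $\pi_D$ (onto the walk $e_1\cdots e_n$) of all binding trails of $D$ matching $R$. *)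

theory Defs
  imports Main "HOL-Library.Extended_Nat"
begin

record ('s,'v,'e) db =
  alph  :: "'s set"
  verts :: "'v set"
  edges :: "'e set"
  src   :: "'e \<Rightarrow> 'v"
  tgt   :: "'e \<Rightarrow> 'v"
  lbl   :: "'e \<Rightarrow> 's set"

definition wf_db :: "('s,'v,'e) db \<Rightarrow> bool" where
  "wf_db D \<longleftrightarrow> finite (alph D) \<and> finite (verts D) \<and> finite (edges D)
     \<and> src D ` edges D \<subseteq> verts D \<and> tgt D ` edges D \<subseteq> verts D
     \<and> (\<forall>e\<in>edges D. lbl D e \<subseteq> alph D)"

text \<open>A walk (n0,e0,n1,...,e_{k-1},nk) is represented by its start vertex n0 and
  its edge list [e0,...,e_{k-1}]; the intermediate vertices are determined.\<close>

fun chain :: "('s,'v,'e) db \<Rightarrow> 'v \<Rightarrow> 'e list \<Rightarrow> bool" where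
  "chain D n [] = True"
| "chain D n (e # es) \<longleftrightarrow> src D e = n \<and> chain D (tgt D e) es"

definition is_walk :: "('s,'v,'e) db \<Rightarrow> 'v \<times> 'e list \<Rightarrow> bool" where
  "is_walk D w \<longleftrightarrow> fst w \<in> verts D \<and> set (snd w) \<subseteq> edges D \<and> chain D (fst w) (snd w)"

definition walk_end :: "('s,'v,'e) db \<Rightarrow> 'v \<times> 'e list \<Rightarrow> 'v" where
  "walk_end D w = (if snd w = [] then fst w else tgt D (last (snd w)))"

definition in_walk_lbl :: "('s,'v,'e) db \<Rightarrow> 's list \<Rightarrow> 'e list \<Rightarrow> bool" where
  "in_walk_lbl D u es \<longleftrightarrow> list_all2 (\<lambda>a e. a \<in> lbl D e) u es"

text \<open>Bags are represented by multiplicity functions into enat (possibly infinite).\<close>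

definition bag_count :: "'x set \<Rightarrow> enat" where
  "bag_count S = (if finite S then enat (card S) else \<infinity>)"

definition bag_image :: "('x \<Rightarrow> 'y) \<Rightarrow> 'x set \<Rightarrow> 'y \<Rightarrow> enat" where
  "bag_image f S = (\<lambda>y. bag_count {x \<in> S. f x = y})"

datatype 'a rexp = Eps | Atom 'a | Star "'a rexp" | Conc "'a rexp" "'a rexp" | Plus "'a rexp" "'a rexp"

fun atoms :: "'a rexp \<Rightarrow> 'a set" where
  "atoms Eps = {}"
| "atoms (Atom a) = {a}"
| "atoms (Star r) = atoms r"
| "atoms (Conc r s) = atoms r \<union> atoms s"
| "atoms (Plus r s) = atoms r \<union> atoms s"

inductive_set star_lang :: "'a list set \<Rightarrow> 'a list set" for L where
  star_nil: "[] \<in> star_lang L"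
| star_app: "u \<in> L \<Longrightarrow> v \<in> star_lang L \<Longrightarrow> u @ v \<in> star_lang L"

fun lang :: "'a rexp \<Rightarrow> 'a list set" where
  "lang Eps = {[]}"
| "lang (Atom a) = {[a]}"
| "lang (Star r) = star_lang (lang r)"
| "lang (Conc r s) = {u @ v | u v. u \<in> lang r \<and> v \<in> lang s}"
| "lang (Plus r s) = lang r \<union> lang s"

text \<open>Linearisation: the k-th atom occurrence (left to right, from 0) labelled a
  becomes the position (k,a); hence distinct occurrences get distinct positions,
  and the letter replaced by position \<alpha> is snd \<alpha>.\<close>

fun linf :: "nat \<Rightarrow> 'a rexp \<Rightarrow> (nat \<times> 'a) rexp \<times> nat" where
  "linf n Eps = (Eps, n)"
| "linf n (Atom a) = (Atom (n, a), Suc n)"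
| "linf n (Star r) = (let (r', m) = linf n r in (Star r', m))"
| "linf n (Conc r s) = (let (r', m) = linf n r; (s', k) = linf m s in (Conc r' s', k))"
| "linf n (Plus r s) = (let (r', m) = linf n r; (s', k) = linf m s in (Plus r' s', k))"

definition lin :: "'a rexp \<Rightarrow> (nat \<times> 'a) rexp" where
  "lin R = fst (linf 0 R)"

abbreviation ovl :: "nat \<times> 'a \<Rightarrow> 'a" where
  "ovl \<alpha> \<equiv> snd \<alpha>"

record ('s,'q) nfa =
  states :: "'q set"
  trans  :: "('q \<times> 's \<times> 'q) set"
  init   :: "'q set"
  final  :: "'q set"

definition step_rel :: "('s,'q) nfa \<Rightarrow> ('q \<times> 'q) set" where
  "step_rel A = {(q, q'). \<exists>a. (q, a, q') \<in> trans A}"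

definition useful :: "('s,'q) nfa \<Rightarrow> 'q set" where
  "useful A = {q \<in> states A. (\<exists>p\<in>init A. (p, q) \<in> (step_rel A)\<^sup>*)
                            \<and> (\<exists>f\<in>final A. (q, f) \<in> (step_rel A)\<^sup>*)}"

definition trim :: "('s,'q) nfa \<Rightarrow> ('s,'q) nfa" where
  "trim A = \<lparr> states = useful A,
              trans = {(q, a, q') \<in> trans A. q \<in> useful A \<and> q' \<in> useful A},
              init = init A \<inter> useful A,
              final = final A \<inter> useful A \<rparr>"

text \<open>States: None is the initial state i, Some \<alpha> is position \<alpha>.\<close>
definition glushkov_full :: "'a rexp \<Rightarrow> ('a, (nat \<times> 'a) option) nfa" where
  "glushkov_full R = (let R' = lin R; \<Gamma> = atoms R' in
     \<lparr> states = {None} \<union> Some ` \<Gamma>,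
       trans = {(Some \<alpha>, ovl \<beta>, Some \<beta>) | \<alpha> \<beta>. \<alpha> \<in> \<Gamma> \<and> \<beta> \<in> \<Gamma> \<and>
                   (\<exists>u v. u @ [\<alpha>, \<beta>] @ v \<in> lang R')}
             \<union> {(None, ovl \<alpha>, Some \<alpha>) | \<alpha>. \<alpha> \<in> \<Gamma> \<and> (\<exists>u. \<alpha> # u \<in> lang R')},
       init = {None},
       final = {Some \<alpha> | \<alpha>. \<alpha> \<in> \<Gamma> \<and> (\<exists>u. u @ [\<alpha>] \<in> lang R')}
               \<union> (if [] \<in> lang R' then {None} else {}) \<rparr>)"

definition Gl :: "'a rexp \<Rightarrow> ('a, (nat \<times> 'a) option) nfa" where
  "Gl R = trim (glushkov_full R)"

definition run_db :: "('s,'v,'e) db \<Rightarrow> ('s,'q) nfa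
                      \<Rightarrow> ('s, 'v \<times> 'q, 'e \<times> ('q \<times> 's \<times> 'q)) db" where
  "run_db D A = \<lparr> alph = alph D,
     verts = verts D \<times> states A,
     edges = {(e, \<delta>). e \<in> edges D \<and> \<delta> \<in> trans A \<and> fst (snd \<delta>) \<in> lbl D e},
     src = (\<lambda>(e, (q, a, q')). (src D e, q)),
     tgt = (\<lambda>(e, (q, a, q')). (tgt D e, q')),
     lbl = (\<lambda>(e, (q, a, q')). {a}) \<rparr>"

text \<open>match_A(D): the set (= bag, each run occurring once) of all runs of D \<times> A.\<close>
definition match :: "('s,'q) nfa \<Rightarrow> ('s,'v,'e) db
                     \<Rightarrow> (('v \<times> 'q) \<times> ('e \<times> ('q \<times> 's \<times> 'q)) list) set" where
  "match A D = {r. is_walk (run_db D A) r \<and> snd (fst r) \<in> init A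
                   \<and> snd (walk_end (run_db D A) r) \<in> final A}"

definition proj_run :: "(('v \<times> 'q) \<times> ('e \<times> ('q \<times> 's \<times> 'q)) list) \<Rightarrow> 'v \<times> 'e list" where
  "proj_run r = (fst (fst r), map fst (snd r))"

definition bindingtrail :: "(('v \<times> 'q) \<times> ('e \<times> ('q \<times> 's \<times> 'q)) list) set
                            \<Rightarrow> (('v \<times> 'q) \<times> ('e \<times> ('q \<times> 's \<times> 'q)) list) set" where
  "bindingtrail S = {r \<in> S. distinct (map (\<lambda>(e, (q, a, q')). (e, q')) (snd r))}"

text \<open>A binding trail is recorded together with the start vertex of its walk
  (needed for the empty trail, whose walk is a single vertex).\<close>
definition is_binding_trail :: "('a,'v,'e) db \<Rightarrow> 'a rexp \<Rightarrow> 'v \<times> ('e \<times> (nat \<times> 'a)) list \<Rightarrow> bool" where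
  "is_binding_trail D R t \<longleftrightarrow>
     is_walk D (fst t, map fst (snd t))
     \<and> in_walk_lbl D (map (\<lambda>x. ovl (snd x)) (snd t)) (map fst (snd t))
     \<and> map snd (snd t) \<in> lang (lin R)
     \<and> distinct (snd t)"

definition proj_bt :: "'v \<times> ('e \<times> (nat \<times> 'a)) list \<Rightarrow> 'v \<times> 'e list" where
  "proj_bt t = (fst t, map fst (snd t))"

definition BT_sem :: "'a rexp \<Rightarrow> ('a,'v,'e) db \<Rightarrow> 'v \<times> 'e list \<Rightarrow> enat" where
  "BT_sem R D = bag_image proj_bt {t. is_binding_trail D R t}"

end

theory Submission
  imports Defs
begin

(*
  Linearisation makes every atom of R' occur once, and for such a linear expression
  membership is local: a nonempty word lies in the language iff its first letter can
  begin a word, its last letter can end one, and each pair of adjacent letters occurs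
  adjacently in some word.  This is proved by induction on the expression: the operands
  of Conc and Plus have disjoint atoms, so a locally correct word splits along them.

  The Glushkov automaton checks exactly these local conditions and enters state b
  whenever it reads position b.  So its accepting paths from i spell the words of L(R'),
  and trimming removes none of them.  A run of D x Gl(R) is therefore determined by its
  start vertex and its pairs (e_k, q_(k+1)).  Reading these pairs as the (e_k, alpha_k)
  of a binding trail gives a bijection between binding trails and the runs kept by the
  bindingtrail filter.  It commutes with the projections onto D, hence the two bags are
  equal.
*)

definition firsts :: "'a list set \<Rightarrow> 'a set" where
  "firsts L = {a. \<exists>u. a # u \<in> L}"

definition lasts :: "'a list set \<Rightarrow> 'a set" where
  "lasts L = {a. \<exists>u. u @ [a] \<in> L}"

definition follows :: "'a list set \<Rightarrow> 'a \<Rightarrow> 'a \<Rightarrow> bool" where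
  "follows L a b \<longleftrightarrow> (\<exists>u v. u @ [a, b] @ v \<in> L)"

definition local_word :: "'a list set \<Rightarrow> 'a list \<Rightarrow> bool" where
  "local_word L w \<longleftrightarrow>
     w \<noteq> [] \<and> hd w \<in> firsts L \<and> last w \<in> lasts L \<and> successively (follows L) w"

lemma firsts_Un [simp]: "firsts (A \<union> B) = firsts A \<union> firsts B"
  by (auto simp: firsts_def)

lemma lasts_Un [simp]: "lasts (A \<union> B) = lasts A \<union> lasts B"
  by (auto simp: lasts_def)

lemma follows_Un [simp]: "follows (A \<union> B) a b \<longleftrightarrow> follows A a b \<or> follows B a b"
  by (auto simp: follows_def)

lemma successively_follows_suffix: "x @ y \<in> L \<Longrightarrow> successively (follows L) y"
proof (induction y arbitrary: x rule: induct_list012)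
  case (3 a b y)
  have "follows L a b"
    using "3.prems" unfolding follows_def by (metis append_Cons append_Nil)
  moreover have "successively (follows L) (b # y)"
    using "3.IH"(2)[of "x @ [a]"] "3.prems" by simp
  ultimately show ?case by simp
qed simp_all

lemma local_word_if_mem:
  assumes "w \<in> L" "w \<noteq> []"
  shows "local_word L w"
proof -
  have "hd w # tl w \<in> L" "butlast w @ [last w] \<in> L"
    using assms by simp_all
  then have "hd w \<in> firsts L" "last w \<in> lasts L"
    unfolding firsts_def lasts_def by blast+
  moreover have "successively (follows L) w"
    using successively_follows_suffix[of "[]" w L] assms(1) by simp
  ultimately show ?thesis using assms(2) by (simp add: local_word_def)
qed

lemma star_lang_atoms:
  "w \<in> star_lang L \<Longrightarrow> (\<And>x. x \<in> L \<Longrightarrow> set x \<subseteq> A) \<Longrightarrow> set w \<subseteq> A"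
  by (induction rule: star_lang.induct) auto

lemma lang_atoms: "w \<in> lang r \<Longrightarrow> set w \<subseteq> atoms r"
proof (induction r arbitrary: w)
  case (Star r)
  then show ?case using star_lang_atoms[of w "lang r" "atoms r"] by auto
qed fastforce+

lemma hd_in_atoms: "b # u \<in> lang r \<Longrightarrow> b \<in> atoms r"
  using lang_atoms by fastforce

lemma last_in_atoms: "u @ [b] \<in> lang r \<Longrightarrow> b \<in> atoms r"
  using lang_atoms by fastforce

lemma adjacent_in_atoms: "u @ [a, b] @ v \<in> lang r \<Longrightarrow> a \<in> atoms r \<and> b \<in> atoms r"
  using lang_atoms by fastforce

lemma firsts_lang_atoms: "a \<in> firsts (lang r) \<Longrightarrow> a \<in> atoms r"
  by (auto simp: firsts_def dest: hd_in_atoms)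

lemma lasts_lang_atoms: "a \<in> lasts (lang r) \<Longrightarrow> a \<in> atoms r"
  by (auto simp: lasts_def dest: last_in_atoms)

lemma follows_lang_atoms: "follows (lang r) a b \<Longrightarrow> a \<in> atoms r \<and> b \<in> atoms r"
  unfolding follows_def by (blast dest: adjacent_in_atoms)

lemma append_eq_append_pair_cases:
  "u @ [a, b] @ v = x @ y \<Longrightarrow>
     (\<exists>v'. x = u @ [a, b] @ v') \<or> (\<exists>u'. y = u' @ [a, b] @ v) \<or> (x = u @ [a] \<and> y = b # v)"
  by (auto simp: append_eq_append_conv2 Cons_eq_append_conv)

lemma firsts_lang_Conc:
  "a \<in> firsts (lang (Conc r s)) \<Longrightarrow> a \<in> firsts (lang r) \<or> [] \<in> lang r \<and> a \<in> firsts (lang s)"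
  by (auto simp: firsts_def Cons_eq_append_conv)

lemma lasts_lang_Conc:
  assumes "a \<in> lasts (lang (Conc r s))"
  shows "a \<in> lasts (lang s) \<or> [] \<in> lang s \<and> a \<in> lasts (lang r)"
proof -
  obtain u x y where xy: "u @ [a] = x @ y" "x \<in> lang r" "y \<in> lang s"
    using assms by (auto simp: lasts_def)
  show ?thesis
  proof (cases y rule: rev_cases)
    case Nil
    then show ?thesis using xy by (auto simp: lasts_def)
  next
    case (snoc y' c)
    then show ?thesis using xy by (auto simp: lasts_def)
  qed
qed

lemma follows_lang_Conc:
  assumes "follows (lang (Conc r s)) a b"
  shows "follows (lang r) a b \<or> follows (lang s) a b \<or> a \<in> lasts (lang r) \<and> b \<in> firsts (lang s)"
proof -
  obtain u v x y where xy: "u @ [a, b] @ v = x @ y" "x \<in> lang r" "y \<in> lang s"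
    using assms by (auto simp: follows_def)
  from append_eq_append_pair_cases[OF xy(1)] show ?thesis
    using xy(2,3) unfolding follows_def lasts_def firsts_def by blast
qed

lemma firsts_star_lang: "w \<in> star_lang L \<Longrightarrow> w \<noteq> [] \<Longrightarrow> hd w \<in> firsts L"
proof (induction rule: star_lang.induct)
  case (star_app u v)
  then show ?case by (cases u) (auto simp: firsts_def)
qed simp

lemma lasts_star_lang: "w \<in> star_lang L \<Longrightarrow> w \<noteq> [] \<Longrightarrow> last w \<in> lasts L"
proof (induction rule: star_lang.induct)
  case (star_app u v)
  then show ?case by (cases u rule: rev_cases) (auto simp: lasts_def)
qed simp

lemma follows_star_lang:
  assumes "follows (star_lang L) a b"
  shows "follows L a b \<or> a \<in> lasts L \<and> b \<in> firsts L"
proof -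
  obtain u v where "u @ [a, b] @ v \<in> star_lang L"
    using assms by (auto simp: follows_def)
  then show ?thesis
  proof (induction "u @ [a, b] @ v" arbitrary: u rule: star_lang.induct)
    case (star_app x y)
    from append_eq_append_pair_cases[OF star_app.hyps(4)[symmetric]] show ?case
    proof (elim disjE exE conjE)
      fix v' assume "x = u @ [a, b] @ v'"
      then show ?thesis using star_app.hyps(1) by (auto simp: follows_def)
    next
      fix u' assume "y = u' @ [a, b] @ v"
      then show ?thesis by (rule star_app.hyps(3))
    next
      assume "x = u @ [a]" "y = b # v"
      then show ?thesis
        using star_app.hyps(1) firsts_star_lang[OF star_app.hyps(2)] by (auto simp: lasts_def)
    qed
  qed simp
qed

fun linear_rexp :: "'a rexp \<Rightarrow> bool" where
  "linear_rexp (Star r) \<longleftrightarrow> linear_rexp r"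
| "linear_rexp (Conc r s) \<longleftrightarrow> linear_rexp r \<and> linear_rexp s \<and> atoms r \<inter> atoms s = {}"
| "linear_rexp (Plus r s) \<longleftrightarrow> linear_rexp r \<and> linear_rexp s \<and> atoms r \<inter> atoms s = {}"
| "linear_rexp _ \<longleftrightarrow> True"

lemma linf_bounds: "n \<le> snd (linf n r) \<and> atoms (fst (linf n r)) \<subseteq> {n..<snd (linf n r)} \<times> UNIV"
proof (induction r arbitrary: n)
  case (Star r)
  then show ?case by (cases "linf n r") (use Star.IH[of n] in auto)
next
  case (Conc r s)
  obtain r' m s' k where "linf n r = (r', m)" "linf m s = (s', k)" by (metis prod.exhaust)
  then show ?case using Conc.IH(1)[of n] Conc.IH(2)[of m] by fastforce
next
  case (Plus r s)
  obtain r' m s' k where "linf n r = (r', m)" "linf m s = (s', k)" by (metis prod.exhaust)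
  then show ?case using Plus.IH(1)[of n] Plus.IH(2)[of m] by fastforce
qed auto

lemma linear_rexp_linf: "linear_rexp (fst (linf n r))"
proof (induction r arbitrary: n)
  case (Star r)
  then show ?case by (cases "linf n r") (use Star.IH[of n] in auto)
next
  case (Conc r s)
  obtain r' m s' k where "linf n r = (r', m)" "linf m s = (s', k)" by (metis prod.exhaust)
  then show ?case using Conc.IH(1)[of n] Conc.IH(2)[of m] linf_bounds[of n r] linf_bounds[of m s]
    by fastforce
next
  case (Plus r s)
  obtain r' m s' k where "linf n r = (r', m)" "linf m s = (s', k)" by (metis prod.exhaust)
  then show ?case using Plus.IH(1)[of n] Plus.IH(2)[of m] linf_bounds[of n r] linf_bounds[of m s]
    by fastforce
qed auto

lemma linear_rexp_lin: "linear_rexp (lin R)"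
  by (simp add: lin_def linear_rexp_linf)

lemma set_subset_if_successively:
  "successively P w \<Longrightarrow> w \<noteq> [] \<Longrightarrow> hd w \<in> A \<Longrightarrow> (\<And>a b. P a b \<Longrightarrow> a \<in> A \<Longrightarrow> b \<in> A)
   \<Longrightarrow> set w \<subseteq> A"
  by (induction P w rule: successively.induct) auto

lemma set_dropWhile_subset_if_closed:
  assumes "successively P w" "set w \<subseteq> A \<union> B" "\<And>a b. P a b \<Longrightarrow> a \<in> B \<Longrightarrow> b \<in> B"
  shows "set (dropWhile (\<lambda>c. c \<in> A) w) \<subseteq> B"
proof (cases "dropWhile (\<lambda>c. c \<in> A) w = []")
  case False
  let ?y = "dropWhile (\<lambda>c. c \<in> A) w"
  have "hd ?y \<notin> A" using hd_dropWhile[OF False] .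
  moreover have "hd ?y \<in> set w" using False set_dropWhileD hd_in_set by metis
  ultimately have "hd ?y \<in> B" using assms(2) by blast
  moreover have "successively P ?y"
    using assms(1) takeWhile_dropWhile_id[of "\<lambda>c. c \<in> A" w]
    by (metis successively_append_iff)
  ultimately show ?thesis using set_subset_if_successively[of P ?y B] False assms(3) by blast
qed (simp del: dropWhile_eq_Nil_conv)

lemma local_word_Plus_left:
  assumes "atoms r \<inter> atoms s = {}" "local_word (lang r \<union> lang s) w" "hd w \<in> firsts (lang r)"
  shows "local_word (lang r) w"
proof -
  have w: "w \<noteq> []" "last w \<in> lasts (lang r) \<union> lasts (lang s)"
      "successively (\<lambda>a b. follows (lang r) a b \<or> follows (lang s) a b) w"
    using assms(2) by (simp_all add: local_word_def)
  have "set w \<subseteq> atoms r"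
    using set_subset_if_successively[OF w(3) w(1) firsts_lang_atoms[OF assms(3)]] assms(1)
    by (blast dest: follows_lang_atoms)
  have "last w \<in> atoms r"
    using \<open>set w \<subseteq> atoms r\<close> w(1) by auto
  then have "last w \<in> lasts (lang r)"
    using w(2) assms(1) by (blast dest: lasts_lang_atoms)
  moreover have "successively (follows (lang r)) w"
    using \<open>set w \<subseteq> atoms r\<close> assms(1)
    by (intro successively_mono[OF w(3)]) (blast dest: follows_lang_atoms)
  ultimately show ?thesis using w(1) assms(3) by (simp add: local_word_def)
qed

lemma local_word_Plus:
  assumes "atoms r \<inter> atoms s = {}" "local_word (lang (Plus r s)) w"
  shows "local_word (lang r) w \<or> local_word (lang s) w"
proof -
  have "hd w \<in> firsts (lang r) \<or> hd w \<in> firsts (lang s)"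
    using assms(2) by (simp add: local_word_def)
  then show ?thesis
    using local_word_Plus_left[of r s w] local_word_Plus_left[of s r w] assms
    by (auto simp: Un_commute Int_commute)
qed

lemma local_word_Conc_split:
  assumes disj: "atoms r \<inter> atoms s = {}" and w: "local_word (lang (Conc r s)) w"
  defines "x \<equiv> takeWhile (\<lambda>c. c \<in> atoms r) w" and "y \<equiv> dropWhile (\<lambda>c. c \<in> atoms r) w"
  shows "set x \<subseteq> atoms r" "set y \<subseteq> atoms s"
    "successively (follows (lang r)) x" "successively (follows (lang s)) y"
    "x \<noteq> [] \<Longrightarrow> y \<noteq> [] \<Longrightarrow> last x \<in> lasts (lang r) \<and> hd y \<in> firsts (lang s)"
proof -
  let ?F = "follows (lang (Conc r s))"
  have F: "follows (lang r) a b \<or> follows (lang s) a b \<or> a \<in> lasts (lang r) \<and> b \<in> firsts (lang s)"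
    if "?F a b" for a b
    using that by (rule follows_lang_Conc)
  have F_r: "follows (lang r) a b" if "?F a b" "a \<in> atoms r" "b \<in> atoms r" for a b
    using F[OF that(1)] that(2,3) disj follows_lang_atoms[of s a b] firsts_lang_atoms[of b s] by blast
  have F_s: "follows (lang s) a b" if "?F a b" "a \<in> atoms s" "b \<in> atoms s" for a b
    using F[OF that(1)] that(2,3) disj follows_lang_atoms[of r a b] lasts_lang_atoms[of a r] by blast
  have F_rs: "a \<in> lasts (lang r) \<and> b \<in> firsts (lang s)"
    if "?F a b" "a \<in> atoms r" "b \<in> atoms s" for a b
    using F[OF that(1)] that(2,3) disj follows_lang_atoms[of r a b] follows_lang_atoms[of s a b] by blast
  have F_s_closed: "b \<in> atoms s" if "?F a b" "a \<in> atoms s" for a b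
    using F[OF that(1)] that(2) disj follows_lang_atoms[of r a b] follows_lang_atoms[of s a b]
      lasts_lang_atoms[of a r] firsts_lang_atoms[of b s] by blast
  have ne: "w \<noteq> []" and hd_w: "hd w \<in> firsts (lang (Conc r s))" and succ_w: "successively ?F w"
    using w unfolding local_word_def by blast+
  have "set w \<subseteq> atoms (Conc r s)"
    using set_subset_if_successively[OF succ_w ne firsts_lang_atoms[OF hd_w]]
      follows_lang_atoms[of "Conc r s"] by blast
  then have w_atoms: "set w \<subseteq> atoms r \<union> atoms s" by simp
  show x_atoms: "set x \<subseteq> atoms r"
    unfolding x_def by (auto dest: set_takeWhileD)
  show y_atoms: "set y \<subseteq> atoms s"
    unfolding y_def by (rule set_dropWhile_subset_if_closed[OF succ_w w_atoms F_s_closed])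
  have "successively ?F (x @ y)" using succ_w by (simp add: x_def y_def)
  then have succ_xy: "successively ?F x" "successively ?F y"
      "x \<noteq> [] \<Longrightarrow> y \<noteq> [] \<Longrightarrow> ?F (last x) (hd y)"
    unfolding successively_append_iff by auto
  show "successively (follows (lang r)) x"
    by (rule successively_mono[OF succ_xy(1)]) (use x_atoms F_r in blast)
  show "successively (follows (lang s)) y"
    by (rule successively_mono[OF succ_xy(2)]) (use y_atoms F_s in blast)
  show "last x \<in> lasts (lang r) \<and> hd y \<in> firsts (lang s)" if "x \<noteq> []" "y \<noteq> []"
  proof -
    have "last x \<in> atoms r" "hd y \<in> atoms s"
      using that x_atoms y_atoms last_in_set hd_in_set by blast+
    then show ?thesis using F_rs[OF succ_xy(3)[OF that]] by blast
  qed
qed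

lemma local_word_Conc:
  assumes disj: "atoms r \<inter> atoms s = {}"
    and local_r: "\<And>x. local_word (lang r) x \<Longrightarrow> x \<in> lang r"
    and local_s: "\<And>y. local_word (lang s) y \<Longrightarrow> y \<in> lang s"
    and w: "local_word (lang (Conc r s)) w"
  shows "w \<in> lang (Conc r s)"
proof -
  define x where "x = takeWhile (\<lambda>c. c \<in> atoms r) w"
  define y where "y = dropWhile (\<lambda>c. c \<in> atoms r) w"
  note xy = local_word_Conc_split[OF disj w, folded x_def y_def]
  have ne: "w \<noteq> []"
    and hd_w: "hd w \<in> firsts (lang r) \<or> [] \<in> lang r \<and> hd w \<in> firsts (lang s)"
    and last_w: "last w \<in> lasts (lang s) \<or> [] \<in> lang s \<and> last w \<in> lasts (lang r)"
    using w firsts_lang_Conc[of "hd w" r s] lasts_lang_Conc[of "last w" r s]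
    unfolding local_word_def by blast+
  have hd_r: "hd w \<in> firsts (lang r)" if "hd w \<in> atoms r"
    using hd_w that disj firsts_lang_atoms[of "hd w" s] by blast
  have hd_s: "[] \<in> lang r \<and> hd w \<in> firsts (lang s)" if "hd w \<in> atoms s"
    using hd_w that disj firsts_lang_atoms[of "hd w" r] by blast
  have last_s: "last w \<in> lasts (lang s)" if "last w \<in> atoms s"
    using last_w that disj lasts_lang_atoms[of "last w" r] by blast
  have last_r: "[] \<in> lang s \<and> last w \<in> lasts (lang r)" if "last w \<in> atoms r"
    using last_w that disj lasts_lang_atoms[of "last w" s] by blast
  have w_eq: "w = x @ y" by (simp add: x_def y_def)
  have "x \<in> lang r"
  proof (cases "x = []")
    case True
    then have "hd w \<in> atoms s" using w_eq xy(2) ne by (metis append_Nil hd_in_set subsetD)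
    then show ?thesis using True hd_s by simp
  next
    case False
    then have "hd x = hd w" "hd w \<in> atoms r" using w_eq xy(1) by (metis hd_append2 hd_in_set subsetD)+
    then have "hd x \<in> firsts (lang r)" using hd_r by simp
    moreover have "last x \<in> lasts (lang r)"
    proof (cases "y = []")
      case True
      then have "last x = last w" "last w \<in> atoms r" using False w_eq xy(1)
        by (metis append_Nil2 last_in_set subsetD)+
      then show ?thesis using last_r by simp
    next
      case False
      then show ?thesis using \<open>x \<noteq> []\<close> xy(5) by simp
    qed
    ultimately show ?thesis using False xy(3) by (intro local_r) (simp add: local_word_def)
  qed
  moreover have "y \<in> lang s"
  proof (cases "y = []")
    case True
    then have "last w \<in> atoms r" using w_eq xy(1) ne by (metis append_Nil2 last_in_set subsetD)
    then show ?thesis using True last_r by simp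
  next
    case False
    then have "last y = last w" "last w \<in> atoms s" using w_eq xy(2)
      by (metis last_append last_in_set subsetD)+
    then have "last y \<in> lasts (lang s)" using last_s by simp
    moreover have "hd y \<in> firsts (lang s)"
    proof (cases "x = []")
      case True
      then have "hd y = hd w" "hd w \<in> atoms s" using False w_eq xy(2)
        by (metis append_Nil hd_in_set subsetD)+
      then show ?thesis using hd_s by simp
    next
      case False
      then show ?thesis using \<open>y \<noteq> []\<close> xy(5) by simp
    qed
    ultimately show ?thesis using False xy(4) by (intro local_s) (simp add: local_word_def)
  qed
  ultimately show ?thesis using w_eq by auto
qed

lemma local_word_Star:
  assumes local_r: "\<And>x. local_word (lang r) x \<Longrightarrow> x \<in> lang r"
    and w: "local_word (lang (Star r)) w"
  shows "w \<in> star_lang (lang r)"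
proof -
  let ?F = "follows (star_lang (lang r))"
  \<comment> \<open>x is the factor of r currently being read; it is closed at the first pair of w
    that is not a follow pair of r.\<close>
  have glue: "x @ y \<in> star_lang (lang r)"
    if "x \<noteq> []" "hd x \<in> firsts (lang r)" "successively (follows (lang r)) x"
      "successively ?F (x @ y)" "last (x @ y) \<in> lasts (lang r)" for x y
    using that
  proof (induction y arbitrary: x)
    case Nil
    then have "x \<in> lang r" by (intro local_r) (simp add: local_word_def)
    then show ?case using star_app[OF _ star_nil] by fastforce
  next
    case (Cons b y)
    have F: "?F (last x) b" "successively ?F (b # y)"
      using Cons.prems(1,4) by (auto simp: successively_append_iff)
    consider "follows (lang r) (last x) b" | "last x \<in> lasts (lang r)" "b \<in> firsts (lang r)"
      using follows_star_lang[OF F(1)] by blast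
    then show ?case
    proof cases
      case 1
      then have "(x @ [b]) @ y \<in> star_lang (lang r)"
        using Cons.prems by (intro Cons.IH) (auto simp: successively_append_iff)
      then show ?thesis by simp
    next
      case 2
      then have "x \<in> lang r" using Cons.prems by (intro local_r) (simp add: local_word_def)
      moreover have "[b] @ y \<in> star_lang (lang r)"
        using 2 F(2) Cons.prems(5) by (intro Cons.IH) auto
      ultimately show ?thesis using star_app by fastforce
    qed
  qed
  have w': "w \<noteq> []" "successively ?F w"
    using w by (simp_all add: local_word_def)
  obtain u v where "hd w # u \<in> star_lang (lang r)" "v @ [last w] \<in> star_lang (lang r)"
    using w by (auto simp: local_word_def firsts_def lasts_def)
  then have "hd w \<in> firsts (lang r)" "last w \<in> lasts (lang r)"
    using firsts_star_lang lasts_star_lang by fastforce+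
  then show ?thesis
    using glue[of "[hd w]" "tl w", unfolded append_Cons append_Nil list.collapse[OF w'(1)]] w'
    by simp
qed

lemma in_lang_if_local_word: "linear_rexp r \<Longrightarrow> local_word (lang r) w \<Longrightarrow> w \<in> lang r"
proof (induction r arbitrary: w)
  case Eps
  then show ?case by (simp add: local_word_def firsts_def)
next
  case (Atom c)
  have "\<not> follows (lang (Atom c)) a b" for a b
    by (auto simp: follows_def append_eq_Cons_conv)
  then show ?case
    using Atom.prems(2) by (cases w) (auto simp: local_word_def firsts_def successively_Cons)
next
  case (Plus r s)
  then show ?case using local_word_Plus[of r s w] by auto
next
  case (Conc r s)
  then show ?case using local_word_Conc[of r s w] by simp
next
  case (Star r)
  then show ?case using local_word_Star[of r w] by simp
qed

lemma states_glushkov_full: "states (glushkov_full R) = insert None (Some ` atoms (lin R))"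
  by (simp add: glushkov_full_def Let_def)

lemma init_glushkov_full: "init (glushkov_full R) = {None}"
  by (simp add: glushkov_full_def Let_def)

lemma trans_glushkov_full_None:
  "(None, c, q') \<in> trans (glushkov_full R) \<longleftrightarrow>
     (\<exists>b. q' = Some b \<and> c = snd b \<and> b \<in> firsts (lang (lin R)))"
  unfolding glushkov_full_def Let_def firsts_def nfa.select_convs by (blast dest: hd_in_atoms)

lemma trans_glushkov_full_Some:
  "(Some a, c, q') \<in> trans (glushkov_full R) \<longleftrightarrow>
     (\<exists>b. q' = Some b \<and> c = snd b \<and> follows (lang (lin R)) a b)"
  unfolding glushkov_full_def Let_def follows_def nfa.select_convs by (blast dest: adjacent_in_atoms)

lemma final_glushkov_full_None: "None \<in> final (glushkov_full R) \<longleftrightarrow> [] \<in> lang (lin R)"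
  by (simp add: glushkov_full_def Let_def)

lemma final_glushkov_full_Some: "Some a \<in> final (glushkov_full R) \<longleftrightarrow> a \<in> lasts (lang (lin R))"
proof -
  have "Some a \<notin> (if [] \<in> lang (lin R) then {None} else {})" by simp
  then show ?thesis
    unfolding glushkov_full_def Let_def lasts_def nfa.select_convs by (blast dest: last_in_atoms)
qed

lemma glushkov_full_trans_closed:
  "(q, c, q') \<in> trans (glushkov_full R) \<Longrightarrow> q' \<in> states (glushkov_full R)"
  by (cases q) (auto simp: trans_glushkov_full_None trans_glushkov_full_Some states_glushkov_full
      dest: firsts_lang_atoms follows_lang_atoms)

fun accepting_path ::
  "('a, ('i \<times> 'a) option) nfa \<Rightarrow> ('i \<times> 'a) option \<Rightarrow> ('i \<times> 'a) list \<Rightarrow> bool" where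
  "accepting_path A q [] \<longleftrightarrow> q \<in> final A"
| "accepting_path A q (b # w) \<longleftrightarrow> (q, snd b, Some b) \<in> trans A \<and> accepting_path A (Some b) w"

lemma accepting_path_glushkov_full_Some:
  "accepting_path (glushkov_full R) (Some a) w \<longleftrightarrow>
     successively (follows (lang (lin R))) (a # w) \<and> last (a # w) \<in> lasts (lang (lin R))"
  by (induction w arbitrary: a) (auto simp: trans_glushkov_full_Some final_glushkov_full_Some)

lemma accepting_path_glushkov_full:
  "accepting_path (glushkov_full R) None w \<longleftrightarrow> w \<in> lang (lin R)"
proof (cases w)
  case Nil
  then show ?thesis by (simp add: final_glushkov_full_None)
next
  case (Cons b u)
  then have "accepting_path (glushkov_full R) None w \<longleftrightarrow> local_word (lang (lin R)) w"
    by (auto simp: trans_glushkov_full_None accepting_path_glushkov_full_Some local_word_def)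
  also have "\<dots> \<longleftrightarrow> w \<in> lang (lin R)"
    using Cons in_lang_if_local_word[OF linear_rexp_lin] local_word_if_mem by blast
  finally show ?thesis .
qed

lemma accepting_path_reaches_final:
  "accepting_path A q w \<Longrightarrow> \<exists>f\<in>final A. (q, f) \<in> (step_rel A)\<^sup>*"
proof (induction w arbitrary: q)
  case (Cons b w)
  then obtain f where "f \<in> final A" "(Some b, f) \<in> (step_rel A)\<^sup>*" by auto
  moreover have "(q, Some b) \<in> step_rel A" using Cons.prems by (auto simp: step_rel_def)
  ultimately show ?case by (meson converse_rtrancl_into_rtrancl)
qed auto

lemma accepting_path_trim:
  assumes "accepting_path A q w" "q \<in> states A" "p \<in> init A" "(p, q) \<in> (step_rel A)\<^sup>*"
    and closed: "\<And>q c q'. (q, c, q') \<in> trans A \<Longrightarrow> q' \<in> states A"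
  shows "accepting_path (trim A) q w"
  using assms(1,2,4)
proof (induction w arbitrary: q)
  case Nil
  then show ?case using assms(3) by (auto simp: trim_def useful_def)
next
  case (Cons b w)
  have step: "(q, snd b, Some b) \<in> trans A" and path: "accepting_path A (Some b) w"
    using Cons.prems(1) by simp_all
  have reach: "(p, Some b) \<in> (step_rel A)\<^sup>*"
    using Cons.prems(3) step by (auto simp: step_rel_def intro: rtrancl_into_rtrancl)
  have "q \<in> useful A" "Some b \<in> useful A"
    using Cons.prems assms(3) closed[OF step] reach accepting_path_reaches_final[OF Cons.prems(1)]
      accepting_path_reaches_final[OF path] unfolding useful_def by blast+
  moreover have "accepting_path (trim A) (Some b) w"
    using Cons.IH[OF path closed[OF step] reach] .
  ultimately show ?case using step by (simp add: trim_def)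
qed

lemma accepting_path_untrim: "accepting_path (trim A) q w \<Longrightarrow> accepting_path A q w"
  by (induction w arbitrary: q) (simp_all add: trim_def)

lemma useful_if_accepting_path_trim: "accepting_path (trim A) q w \<Longrightarrow> q \<in> useful A"
  by (cases w) (simp_all add: trim_def)

lemma accepting_path_Gl: "accepting_path (Gl R) None w \<longleftrightarrow> w \<in> lang (lin R)"
proof
  assume "accepting_path (Gl R) None w"
  then show "w \<in> lang (lin R)"
    unfolding Gl_def accepting_path_glushkov_full[symmetric] by (rule accepting_path_untrim)
next
  assume "w \<in> lang (lin R)"
  then have "accepting_path (glushkov_full R) None w"
    by (simp add: accepting_path_glushkov_full)
  then show "accepting_path (Gl R) None w"
    unfolding Gl_def
    by (rule accepting_path_trim[where p = None, OF _ _ _ _ glushkov_full_trans_closed])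
      (simp_all add: states_glushkov_full init_glushkov_full)
qed

lemma init_Gl: "init (Gl R) \<subseteq> {None}"
  by (simp add: Gl_def trim_def init_glushkov_full)

lemma None_in_Gl:
  assumes "accepting_path (Gl R) None w"
  shows "None \<in> states (Gl R) \<and> None \<in> init (Gl R)"
proof -
  have "None \<in> useful (glushkov_full R)"
    using assms unfolding Gl_def by (rule useful_if_accepting_path_trim)
  then show ?thesis by (simp add: Gl_def trim_def init_glushkov_full)
qed

lemma trans_Gl: "(q, c, q') \<in> trans (Gl R) \<Longrightarrow> \<exists>b. q' = Some b \<and> c = snd b"
  by (cases q) (auto simp: Gl_def trim_def trans_glushkov_full_None trans_glushkov_full_Some)

lemma run_db_simps:
  "verts (run_db D A) = verts D \<times> states A"
  "(e, (p, c, p')) \<in> edges (run_db D A) \<longleftrightarrow> e \<in> edges D \<and> (p, c, p') \<in> trans A \<and> c \<in> lbl D e"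
  "src (run_db D A) (e, (p, c, p')) = (src D e, p)"
  "tgt (run_db D A) (e, (p, c, p')) = (tgt D e, p')"
  by (simp_all add: run_db_def)

lemma walk_end_Cons: "walk_end D (n, e # es) = walk_end D (tgt D e, es)"
  by (simp add: walk_end_def)

fun run_edges :: "('i \<times> 'a) option \<Rightarrow> ('e \<times> ('i \<times> 'a)) list
    \<Rightarrow> ('e \<times> (('i \<times> 'a) option \<times> 'a \<times> ('i \<times> 'a) option)) list" where
  "run_edges q [] = []"
| "run_edges q ((e, b) # t) = (e, (q, snd b, Some b)) # run_edges (Some b) t"

definition run_of_trail :: "'v \<times> ('e \<times> ('i \<times> 'a)) list
    \<Rightarrow> ('v \<times> ('i \<times> 'a) option) \<times> ('e \<times> (('i \<times> 'a) option \<times> 'a \<times> ('i \<times> 'a) option)) list" where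
  "run_of_trail t = ((fst t, None), run_edges None (snd t))"

lemma run_edges_run_db:
  "chain (run_db D A) (n, q) (run_edges q t) \<and> set (run_edges q t) \<subseteq> edges (run_db D A)
     \<and> snd (walk_end (run_db D A) ((n, q), run_edges q t)) \<in> final A
   \<longleftrightarrow> chain D n (map fst t) \<and> set (map fst t) \<subseteq> edges D
     \<and> in_walk_lbl D (map (\<lambda>x. snd (snd x)) t) (map fst t) \<and> accepting_path A q (map snd t)"
proof (induction t arbitrary: n q)
  case Nil
  then show ?case by (simp add: walk_end_def in_walk_lbl_def)
next
  case (Cons x t)
  obtain e b where "x = (e, b)" by (cases x)
  then show ?case
    using Cons.IH[of "tgt D e" "Some b"] by (auto simp: walk_end_Cons run_db_simps in_walk_lbl_def)
qed

lemma run_of_trail_in_match: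
  "run_of_trail t \<in> match A D \<longleftrightarrow> None \<in> states A \<and> None \<in> init A \<and> is_walk D (proj_bt t)
     \<and> in_walk_lbl D (map (\<lambda>x. snd (snd x)) (snd t)) (map fst (snd t))
     \<and> accepting_path A None (map snd (snd t))"
  using run_edges_run_db[of D A "fst t" None "snd t"]
  by (auto simp: match_def run_of_trail_def is_walk_def proj_bt_def run_db_simps)

lemma distinct_run_edges:
  "distinct (map (\<lambda>(e, (q, a, q')). (e, q')) (run_edges p t)) \<longleftrightarrow> distinct t"
proof -
  have "map (\<lambda>(e, (q, a, q')). (e, q')) (run_edges p t) = map (\<lambda>(e, b). (e, Some b)) t"
    by (induction p t rule: run_edges.induct) auto
  then show ?thesis by (auto simp: distinct_map inj_on_def)
qed

lemma run_of_trail_in_bindingtrail_Gl: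
  "run_of_trail t \<in> bindingtrail (match (Gl R) D) \<longleftrightarrow> is_binding_trail D R t"
proof -
  have "snd (run_of_trail t) = run_edges None (snd t)" by (simp add: run_of_trail_def)
  then show ?thesis
    using None_in_Gl[of R "map snd (snd t)"]
    by (auto simp: bindingtrail_def run_of_trail_in_match accepting_path_Gl is_binding_trail_def
        proj_bt_def distinct_run_edges)
qed

lemma run_edges_Cons:
  "run_edges q (x # t) = (fst x, (q, snd (snd x), Some (snd x))) # run_edges (Some (snd x)) t"
  by (cases x) simp

lemma run_edges_inject: "run_edges q t = run_edges q t' \<longleftrightarrow> t = t'"
proof (induction t arbitrary: q t')
  case Nil
  then show ?case by (cases t') (simp_all add: run_edges_Cons)
next
  case (Cons x t)
  then show ?case by (cases t') (auto simp: run_edges_Cons prod_eq_iff)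
qed

lemma inj_run_of_trail: "inj run_of_trail"
  by (auto intro!: injI simp: run_of_trail_def run_edges_inject prod_eq_iff)

lemma run_edges_if_chain_Gl:
  "set es \<subseteq> edges (run_db D (Gl R)) \<Longrightarrow> chain (run_db D (Gl R)) (n, q) es
   \<Longrightarrow> \<exists>t. es = run_edges q t"
proof (induction es arbitrary: n q)
  case Nil
  have "[] = run_edges q []" by simp
  then show ?case ..
next
  case (Cons x es)
  obtain e p c p' where x: "x = (e, (p, c, p'))" by (cases x) auto
  then have step: "(p, c, p') \<in> trans (Gl R)"
    using Cons.prems(1) by (simp add: run_db_simps)
  obtain b where b: "p' = Some b" "c = snd b"
    using trans_Gl[OF step] by blast
  then have q: "p = q" and chain: "chain (run_db D (Gl R)) (tgt D e, Some b) es"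
    using Cons.prems(2) x by (simp_all add: run_db_simps)
  obtain t where t: "es = run_edges (Some b) t"
    using Cons.IH[OF _ chain] Cons.prems(1) by auto
  have "x # es = run_edges q ((e, b) # t)" using x b q t by simp
  then show ?case ..
qed

lemma match_Gl_run_of_trail: "r \<in> match (Gl R) D \<Longrightarrow> \<exists>t. r = run_of_trail t"
proof -
  assume r: "r \<in> match (Gl R) D"
  obtain n q es where r_eq: "r = ((n, q), es)" by (metis prod.collapse)
  have "q = None" "set es \<subseteq> edges (run_db D (Gl R))" "chain (run_db D (Gl R)) (n, q) es"
    using r init_Gl by (auto simp: match_def is_walk_def r_eq)
  then obtain t where "r = run_of_trail (n, t)"
    using run_edges_if_chain_Gl by (fastforce simp: r_eq run_of_trail_def)
  then show ?thesis ..
qed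

lemma map_fst_run_edges: "map fst (run_edges q t) = map fst t"
  by (induction q t rule: run_edges.induct) simp_all

lemma proj_run_run_of_trail: "proj_run (run_of_trail t) = proj_bt t"
  by (simp add: run_of_trail_def proj_run_def proj_bt_def map_fst_run_edges)

lemma bag_image_bij_betw:
  assumes "bij_betw h S T" "\<And>x. x \<in> S \<Longrightarrow> g (h x) = f x"
  shows "bag_image f S = bag_image g T"
proof
  fix y
  have "{x \<in> T. g x = y} = h ` {x \<in> S. f x = y}"
    using assms by (auto simp: bij_betw_def)
  moreover have "inj_on h {x \<in> S. f x = y}"
    using assms(1) by (auto simp: bij_betw_def intro: inj_on_subset)
  ultimately show "bag_image f S y = bag_image g T y"
    by (simp add: bag_image_def bag_count_def finite_image_iff card_image)
qed

lemma bindingtrail_match_Gl: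
  "bindingtrail (match (Gl R) D) = run_of_trail ` {t. is_binding_trail D R t}"
proof (intro equalityI subsetI)
  fix r assume r: "r \<in> bindingtrail (match (Gl R) D)"
  then have m: "r \<in> match (Gl R) D" by (simp add: bindingtrail_def)
  obtain t where t: "r = run_of_trail t"
    using match_Gl_run_of_trail[OF m] by blast
  have "is_binding_trail D R t"
    using r unfolding t by (simp add: run_of_trail_in_bindingtrail_Gl)
  then show "r \<in> run_of_trail ` {t. is_binding_trail D R t}" using t by blast
next
  fix r assume "r \<in> run_of_trail ` {t. is_binding_trail D R t}"
  then show "r \<in> bindingtrail (match (Gl R) D)"
    by (auto simp: run_of_trail_in_bindingtrail_Gl)
qed

theorem lemma28:
  fixes R :: "'a rexp" and D :: "('a, 'v, 'e) db"
  assumes "wf_db D" and "atoms R \<subseteq> alph D"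
  shows "BT_sem R D = bag_image proj_run (bindingtrail (match (Gl R) D))"
proof -
  have "bij_betw run_of_trail {t. is_binding_trail D R t} (bindingtrail (match (Gl R) D))"
    unfolding bindingtrail_match_Gl
    using inj_on_subset[OF inj_run_of_trail subset_UNIV] by (rule inj_on_imp_bij_betw)
  then show ?thesis
    unfolding BT_sem_def by (rule bag_image_bij_betw) (simp add: proj_run_run_of_trail)
qed

end
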